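(* Let $D\subset\mathbb R^m$ be open, let $Y$ be a smooth autonomous vector field on $D$ with flow $\Phi^\tau$, and let $n\in\mathbb N$. Let $X_n(x,\epsilon)$ be the interpolating vector field of the near-identity map $\Phi^\epsilon$. Then $$Y(x)=X_n(x,\epsilon)+O(\epsilon^{2n})\quad\text{as }\epsilon\to0,$$ uniformly for $x$ in every compact subset of $D$.
   Context: For $\epsilon\neq0$ and a point $x$ whose iterates $x_k=(\Phi^\epsilon)^k(x)=\Phi^{k\epsilon}(x)$, $|k|\le n$, are defined, the interpolating vector field is $$X_n(x,\epsilon)=\epsilon^{-1}\sum_{k=1}^n p_{nk}\bigl(x_k-x_{-k}\bigr),\qquad p_{nk}=\frac{(-1)^{k+1}(n!)^2}{k(n+k)!(n-k)!};$$ equivalently, it is the $t$-derivative at $t=0$ of the unique polynomial of degree $2n$ in $t$ taking the value $x_k$ at $t=k\epsilon$ for all integers $|k|\le n$. *)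

theory Defs
  imports "HOL-Analysis.Analysis"
begin

text \<open>C^k on an open set, via iterated directional derivatives
  (for finite-dimensional domains this is the usual notion of k times
  continuously (Frechet) differentiable).\<close>
fun Ck_on :: "nat \<Rightarrow> 'a::euclidean_space set \<Rightarrow> ('a \<Rightarrow> 'b::real_normed_vector) \<Rightarrow> bool" where
  "Ck_on 0 S f = continuous_on S f"
| "Ck_on (Suc k) S f =
     (\<exists>f'. (\<forall>x\<in>S. (f has_derivative f' x) (at x)) \<and> (\<forall>v. Ck_on k S (\<lambda>x. f' x v)))"

definition smooth_on :: "'a::euclidean_space set \<Rightarrow> ('a \<Rightarrow> 'b::real_normed_vector) \<Rightarrow> bool" where
  "smooth_on S f \<longleftrightarrow> (\<forall>k. Ck_on k S f)"

text \<open>Phi is the (maximal) flow of the autonomous vector field Y on D, with flow domain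
  Omega in R x D: Phi t x is defined iff (t,x) is in Omega.\<close>
definition is_flow ::
  "('a::euclidean_space \<Rightarrow> 'a) \<Rightarrow> 'a set \<Rightarrow> (real \<Rightarrow> 'a \<Rightarrow> 'a) \<Rightarrow> (real \<times> 'a) set \<Rightarrow> bool" where
  "is_flow Y D Phi Omega \<longleftrightarrow>
     open Omega \<and> Omega \<subseteq> UNIV \<times> D \<and>
     (\<forall>x\<in>D. (0, x) \<in> Omega \<and> is_interval {t. (t, x) \<in> Omega} \<and> Phi 0 x = x) \<and>
     (\<forall>t x. (t, x) \<in> Omega \<longrightarrow>
        Phi t x \<in> D \<and> ((\<lambda>s. Phi s x) has_vector_derivative Y (Phi t x)) (at t)) \<and>
     (\<forall>x\<in>D. \<forall>J \<phi>. is_interval J \<and> 0 \<in> J \<and> \<phi> 0 = x \<and>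
        (\<forall>t\<in>J. \<phi> t \<in> D \<and> (\<phi> has_vector_derivative Y (\<phi> t)) (at t within J))
        \<longrightarrow> J \<subseteq> {t. (t, x) \<in> Omega})"

definition interp_coeff :: "nat \<Rightarrow> nat \<Rightarrow> real" where
  "interp_coeff n k = (-1) ^ (k + 1) * (fact n)^2 / (real k * fact (n + k) * fact (n - k))"

definition interp_field :: "(real \<Rightarrow> 'a \<Rightarrow> 'a::real_vector) \<Rightarrow> nat \<Rightarrow> 'a \<Rightarrow> real \<Rightarrow> 'a" where
  "interp_field Phi n x \<epsilon> =
     (1 / \<epsilon>) *\<^sub>R (\<Sum>k=1..n. interp_coeff n k *\<^sub>R (Phi (real k * \<epsilon>) x - Phi (- (real k * \<epsilon>)) x))"

end

theory Submission
  imports Defs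
begin

(* The coefficients p_nk make the symmetric difference scheme
     f \<mapsto> (1/\<epsilon>) \<Sum>k. p_nk (f(k\<epsilon>) - f(-k\<epsilon>))
   exact for the derivative at 0 of every polynomial of degree at most 2n: the moments
   \<Sum>k. p_nk (k^j - (-k)^j) equal [j = 1] for j \<le> 2n, which comes down to the vanishing of
   2n-th finite differences of polynomials of lower degree.  Along the flow, the j-th time
   derivative of \<Phi>^t(x) is L_Y^j(id)(\<Phi>^t(x)), L_Y the Lie derivative, so Taylor's theorem
   of order 2n+1 leaves an error O(\<epsilon>^(2n+1))/\<epsilon>.  It is uniform on a compact K because
   for short times the flow from K stays in a compact neighbourhood of K in D, where
   L_Y^(2n+1)(id) is bounded. *)

lemma Ck_on_cong:
  assumes "open S" "\<And>x. x \<in> S \<Longrightarrow> f x = g x" "Ck_on k S f"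
  shows "Ck_on k S g"
  using assms
proof (induction k arbitrary: f g)
  case 0 then show ?case using continuous_on_cong by auto
next
  case (Suc k)
  then obtain f' where f': "\<forall>x\<in>S. (f has_derivative f' x) (at x)" "\<forall>v. Ck_on k S (\<lambda>x. f' x v)"
    by auto
  have "\<forall>x\<in>S. (g has_derivative f' x) (at x)"
    using f'(1) Suc.prems has_derivative_transform_within_open by blast
  then show ?case using f'(2) by auto
qed

lemma Ck_on_SucD: "Ck_on (Suc k) S f \<Longrightarrow> Ck_on k S f"
proof (induction k arbitrary: f)
  case 0
  then obtain f' where "\<forall>x\<in>S. (f has_derivative f' x) (at x)" by auto
  then show ?case
    by (simp, meson continuous_at_imp_continuous_on has_derivative_continuous)
next
  case (Suc k)
  then obtain f' where "\<forall>x\<in>S. (f has_derivative f' x) (at x)" "\<forall>v. Ck_on (Suc k) S (\<lambda>x. f' x v)"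
    by (metis Ck_on.simps(2))
  then show ?case using Suc.IH by auto
qed

lemma Ck_on_const: "Ck_on k S (\<lambda>x. c)"
proof (induction k arbitrary: c)
  case 0 then show ?case by simp
next
  case (Suc k)
  show ?case unfolding Ck_on.simps by (rule exI[of _ "\<lambda>x v. 0"]) (auto simp: Suc.IH)
qed

lemma Ck_on_ident: "Ck_on k S (\<lambda>x. x)"
proof (cases k)
  case 0 then show ?thesis by (simp add: continuous_on_id)
next
  case (Suc k')
  show ?thesis unfolding Suc Ck_on.simps
    by (rule exI[of _ "\<lambda>x v. v"]) (auto simp: Ck_on_const)
qed

lemma Ck_on_add: "Ck_on k S f \<Longrightarrow> Ck_on k S g \<Longrightarrow> Ck_on k S (\<lambda>x. f x + g x)"
proof (induction k arbitrary: f g)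
  case 0 then show ?case by (simp add: continuous_on_add)
next
  case (Suc k)
  obtain f' where f': "\<forall>x\<in>S. (f has_derivative f' x) (at x)" "\<forall>v. Ck_on k S (\<lambda>x. f' x v)"
    using Suc.prems by auto
  obtain g' where g': "\<forall>x\<in>S. (g has_derivative g' x) (at x)" "\<forall>v. Ck_on k S (\<lambda>x. g' x v)"
    using Suc.prems by auto
  show ?case unfolding Ck_on.simps
    by (rule exI[of _ "\<lambda>x v. f' x v + g' x v"]) (use f' g' Suc.IH in \<open>auto intro: has_derivative_add\<close>)
qed

lemma Ck_on_sum:
  "finite I \<Longrightarrow> (\<And>i. i \<in> I \<Longrightarrow> Ck_on k S (f i)) \<Longrightarrow> Ck_on k S (\<lambda>x. \<Sum>i\<in>I. f i x)"
  by (induction I rule: finite_induct) (auto intro: Ck_on_add Ck_on_const)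

lemma Ck_on_bounded_linear: "bounded_linear L \<Longrightarrow> Ck_on k S f \<Longrightarrow> Ck_on k S (\<lambda>x. L (f x))"
proof (induction k arbitrary: f)
  case 0 then show ?case
    using continuous_on_compose2[of UNIV L S f] linear_continuous_on by (auto simp: bounded_linear.linear)
next
  case (Suc k)
  obtain f' where f': "\<forall>x\<in>S. (f has_derivative f' x) (at x)" "\<forall>v. Ck_on k S (\<lambda>x. f' x v)"
    using Suc.prems by auto
  show ?case unfolding Ck_on.simps
    by (rule exI[of _ "\<lambda>x v. L (f' x v)"]) (use f' Suc in \<open>auto intro: bounded_linear.has_derivative\<close>)
qed

lemma Ck_on_scaleR:
  "Ck_on k S (a :: _ \<Rightarrow> real) \<Longrightarrow> Ck_on k S g \<Longrightarrow> Ck_on k S (\<lambda>x. a x *\<^sub>R g x)"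
proof (induction k arbitrary: a g)
  case 0 then show ?case by (simp add: continuous_on_scaleR)
next
  case (Suc k)
  obtain a' where a': "\<forall>x\<in>S. (a has_derivative a' x) (at x)" "\<forall>v. Ck_on k S (\<lambda>x. a' x v)"
    using Suc.prems by auto
  obtain g' where g': "\<forall>x\<in>S. (g has_derivative g' x) (at x)" "\<forall>v. Ck_on k S (\<lambda>x. g' x v)"
    using Suc.prems by auto
  have "Ck_on k S a" "Ck_on k S g" using Suc.prems Ck_on_SucD by auto
  then show ?case unfolding Ck_on.simps
    by (intro exI[of _ "\<lambda>x v. a x *\<^sub>R g' x v + a' x v *\<^sub>R g x"])
      (use a' g' Suc.IH in \<open>auto intro!: has_derivative_scaleR Ck_on_add\<close>)
qed

lemma smooth_on_imp_continuous_on: "smooth_on S f \<Longrightarrow> continuous_on S f"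
  unfolding smooth_on_def by (metis Ck_on.simps(1))

lemma smooth_on_has_derivative:
  assumes "smooth_on S f" "y \<in> S"
  shows "(f has_derivative frechet_derivative f (at y)) (at y)"
proof -
  have "Ck_on (Suc 0) S f" using assms(1) smooth_on_def by blast
  then obtain f' where "(f has_derivative f' y) (at y)" using assms(2) by auto
  then show ?thesis using frechet_derivative_works differentiableI by blast
qed

definition lie_deriv :: "('a::euclidean_space \<Rightarrow> 'a) \<Rightarrow> ('a \<Rightarrow> 'b::real_normed_vector) \<Rightarrow> 'a \<Rightarrow> 'b"
  where "lie_deriv Y g y = frechet_derivative g (at y) (Y y)"

fun lie_iter :: "('a::euclidean_space \<Rightarrow> 'a) \<Rightarrow> nat \<Rightarrow> 'a \<Rightarrow> 'a" where
  "lie_iter Y 0 = (\<lambda>x. x)"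
| "lie_iter Y (Suc j) = lie_deriv Y (lie_iter Y j)"

lemma lie_deriv_ident [simp]: "lie_deriv Y (\<lambda>x. x) = Y"
  by (simp add: lie_deriv_def fun_eq_iff)

lemma smooth_on_lie_deriv:
  assumes D: "open D" and Y: "smooth_on D Y" and g: "smooth_on D g"
  shows "smooth_on D (lie_deriv Y g)"
  unfolding smooth_on_def
proof
  fix k
  obtain g' where g': "\<forall>x\<in>D. (g has_derivative g' x) (at x)" "\<forall>v. Ck_on k D (\<lambda>x. g' x v)"
    using g unfolding smooth_on_def by (metis Ck_on.simps(2))
  have coord: "(\<Sum>i\<in>Basis. (Y y \<bullet> i) *\<^sub>R g' y i) = lie_deriv Y g y" if "y \<in> D" for y
  proof -
    have lin: "linear (g' y)" using g'(1) that has_derivative_linear by blast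
    have "lie_deriv Y g y = g' y (Y y)"
      unfolding lie_deriv_def using g'(1) that frechet_derivative_at by metis
    also have "\<dots> = g' y (\<Sum>i\<in>Basis. (Y y \<bullet> i) *\<^sub>R i)"
      by (simp add: euclidean_representation)
    finally show ?thesis by (simp add: linear_sum[OF lin] linear_scale[OF lin])
  qed
  have "Ck_on k D (\<lambda>y. \<Sum>i\<in>Basis. (Y y \<bullet> i) *\<^sub>R g' y i)"
    apply (rule Ck_on_sum, simp)
    apply (rule Ck_on_scaleR)
     apply (rule Ck_on_bounded_linear[where L = "\<lambda>v. v \<bullet> _"])
    using Y g'(2) by (auto simp: smooth_on_def bounded_linear_inner_left)
  then show "Ck_on k D (lie_deriv Y g)" by (rule Ck_on_cong[OF D coord, rotated])
qed

lemma smooth_on_lie_iter: "open D \<Longrightarrow> smooth_on D Y \<Longrightarrow> smooth_on D (lie_iter Y j)"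
proof (induction j)
  case 0 then show ?case by (simp add: smooth_on_def Ck_on_ident)
next
  case (Suc j) then show ?case using smooth_on_lie_deriv by simp
qed

lemma is_flowD:
  assumes "is_flow Y D Phi Omega"
  shows "open Omega"
    and "x \<in> D \<Longrightarrow> (0, x) \<in> Omega"
    and "x \<in> D \<Longrightarrow> Phi 0 x = x"
    and "(t, x) \<in> Omega \<Longrightarrow> Phi t x \<in> D"
    and "(t, x) \<in> Omega \<Longrightarrow> ((\<lambda>s. Phi s x) has_vector_derivative Y (Phi t x)) (at t)"
  using assms unfolding is_flow_def by auto

lemma has_vector_derivative_along_flow:
  assumes fl: "is_flow Y D Phi Omega" and g: "smooth_on D g" and tx: "(t, x) \<in> Omega"
  shows "((\<lambda>s. g (Phi s x)) has_vector_derivative lie_deriv Y g (Phi t x)) (at t)"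
proof -
  let ?g' = "frechet_derivative g (at (Phi t x))"
  have dg: "(g has_derivative ?g') (at (Phi t x))"
    by (rule smooth_on_has_derivative[OF g is_flowD(4)[OF fl tx]])
  have "((\<lambda>s. g (Phi s x)) has_derivative (\<lambda>h. ?g' (h *\<^sub>R Y (Phi t x)))) (at t)"
    using has_derivative_compose[OF is_flowD(5)[OF fl tx, unfolded has_vector_derivative_def] dg]
    by (simp add: o_def)
  then show ?thesis
    unfolding has_vector_derivative_def lie_deriv_def
    by (simp add: linear_scale[OF has_derivative_linear[OF dg]])
qed

lemma alternating_binomial_sum_poly: "d < N \<Longrightarrow> (\<Sum>j\<le>N. (-1)^j * real (N choose j) * (real j + c)^d) = 0"
proof (induction d arbitrary: N c)
  case 0 then show ?case using choose_alternating_sum[of N, where 'a=real] by simp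
next
  case (Suc d)
  then obtain M where N: "N = Suc M" and dM: "d < M" by (cases N) auto
  have A: "(\<Sum>j\<le>N. (-1)^j * real (N choose j) * (c * (real j + c)^d)) = 0"
    using Suc.IH[of N c] Suc.prems by (simp add: sum_distrib_left[symmetric] mult.left_commute)
  have "(\<Sum>j\<le>N. (-1)^j * real (N choose j) * (real j * (real j + c)^d))
      = (\<Sum>i\<le>M. (-1)^(Suc i) * real (N choose Suc i) * (real (Suc i) * (real (Suc i) + c)^d))"
    unfolding N by (subst sum.atMost_Suc_shift) simp
  also have "\<dots> = (\<Sum>i\<le>M. - real N * ((-1)^i * real (M choose i) * (real i + (c+1))^d))"
  proof (rule sum.cong[OF refl])
    fix i
    have "real ((N choose Suc i) * Suc i) = real (N * (M choose i))"
      unfolding N by (simp only: Suc_times_binomial_eq)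
    then have absorb: "real (N choose Suc i) * (real i + 1) = real N * real (M choose i)"
      by (simp add: algebra_simps)
    have "(-1)^(Suc i) * real (N choose Suc i) * (real (Suc i) * (real (Suc i) + c)^d)
        = - ((-1)^i * (real (N choose Suc i) * (real i + 1)) * (real i + (c+1))^d)"
      by (simp add: add_ac)
    then show "(-1)^(Suc i) * real (N choose Suc i) * (real (Suc i) * (real (Suc i) + c)^d)
       = - real N * ((-1)^i * real (M choose i) * (real i + (c+1))^d)"
      unfolding absorb by simp
  qed
  also have "\<dots> = - real N * (\<Sum>i\<le>M. (-1)^i * real (M choose i) * (real i + (c+1))^d)"
    by (simp add: sum_distrib_left)
  also have "\<dots> = 0" using Suc.IH[of M "c+1"] dM by simp
  finally have B: "(\<Sum>j\<le>N. (-1)^j * real (N choose j) * (real j * (real j + c)^d)) = 0" .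
  have "(\<Sum>j\<le>N. (-1)^j * real (N choose j) * (real j + c)^Suc d)
     = (\<Sum>j\<le>N. (-1)^j * real (N choose j) * (real j * (real j + c)^d))
       + (\<Sum>j\<le>N. (-1)^j * real (N choose j) * (c * (real j + c)^d))"
    by (simp add: sum.distrib[symmetric] algebra_simps)
  then show ?case using A B by simp
qed

lemma sum_atMost_double_split_center:
  fixes f :: "nat \<Rightarrow> real"
  shows "(\<Sum>j\<le>2*n. f j) = f n + (\<Sum>k=1..n. f (n+k) + f (n-k))"
proof -
  have u: "{..2*n} = {..<n} \<union> {n} \<union> {n+1..2*n}" by auto
  have "(\<Sum>j\<le>2*n. f j) = (\<Sum>j<n. f j) + f n + (\<Sum>j=n+1..2*n. f j)"
    unfolding u by (subst sum.union_disjoint, auto)+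
  moreover have "(\<Sum>j=n+1..2*n. f j) = (\<Sum>k=1..n. f (n+k))"
    using sum.shift_bounds_cl_nat_ivl[of f 1 n n] by (simp add: add.commute mult_2)
  moreover have "(\<Sum>j<n. f j) = (\<Sum>k=1..n. f (n-k))"
    by (rule sum.reindex_bij_witness[of _ "\<lambda>k. n - k" "\<lambda>j. n - j"]) auto
  ultimately show ?thesis by (simp add: sum.distrib)
qed

lemma interp_coeff_odd_moment:
  assumes "m < n"
  shows "2 * (\<Sum>k=1..n. interp_coeff n k * real k ^ (2*m+1)) = (if m = 0 then 1 else 0)"
proof -
  \<comment> \<open>the 2n-th finite difference of x^(2m), centred at n\<close>
  define f where "f j = (-1)^j * real ((2*n) choose j) * (real j + - real n)^(2*m)" for j
  have z: "(\<Sum>j\<le>2*n. f j) = 0" unfolding f_def by (rule alternating_binomial_sum_poly) (use assms in auto)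
  define b where "b k = (-1::real)^k * real ((2*n) choose (n+k)) * real k ^ (2*m)" for k
  have fp: "f (n+k) = (-1)^n * b k" for k unfolding f_def b_def by (simp add: power_add)
  have fm: "f (n-k) = (-1)^n * b k" if "k \<in> {1..n}" for k
  proof -
    have c: "(2*n) choose (n-k) = (2*n) choose (n+k)"
      using that binomial_symmetric[of "n-k" "2*n"] by (simp add: algebra_simps)
    have s1: "(-1::real)^(n-k) = (-1)^(n+k)"
    proof -
      have e: "n + k = (n - k) + 2*k" using that by auto
      have "(-1::real)^(n+k) = (-1)^(n-k) * ((-1)^2)^k" unfolding e power_add power_mult ..
      then show ?thesis by simp
    qed
    have s2: "real (n - k) + - real n = - real k" using that by auto
    show ?thesis unfolding f_def b_def c s1 s2 by (simp add: power_add)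
  qed
  have f0: "f n = (-1)^n * real ((2*n) choose n) * 0^(2*m)" unfolding f_def by simp
  have "0 = (-1)^n * (real ((2*n) choose n) * 0^(2*m) + 2 * (\<Sum>k=1..n. b k))"
    using z sum_atMost_double_split_center[of f n] fp fm f0 by (simp add: sum_distrib_left algebra_simps)
  then have e: "real ((2*n) choose n) * 0^(2*m) + 2 * (\<Sum>k=1..n. b k) = 0" by simp
  have cn: "real ((2*n) choose n) = fact (2*n) / (fact n)^2"
    using binomial_fact[of n "2*n"] by (simp add: power2_eq_square mult_2)
  have ck: "interp_coeff n k * real k ^ (2*m+1) = - b k / real ((2*n) choose n)" if "k \<in> {1..n}" for k
  proof -
    have "real ((2*n) choose (n+k)) = fact (2*n) / (fact (n+k) * fact (n-k))"
      using binomial_fact[of "n+k" "2*n"] that by (simp add: mult_2)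
    then show ?thesis using that unfolding interp_coeff_def b_def cn
      by (simp add: field_simps power_add)
  qed
  have pos: "real ((2*n) choose n) > 0" by simp
  have "2 * (\<Sum>k=1..n. interp_coeff n k * real k ^ (2*m+1)) = - 2 * (\<Sum>k=1..n. b k) / real ((2*n) choose n)"
    using ck by (simp add: sum_divide_distrib[symmetric] sum_negf)
  also have "\<dots> = 0^(2*m)" using e pos by (simp add: field_simps)
  finally show ?thesis by simp
qed

lemma interp_coeff_moment:
  assumes "j \<le> 2*n"
  shows "(\<Sum>k=1..n. interp_coeff n k * (real k ^ j - (- real k) ^ j)) = (if j = 1 then 1 else 0)"
proof (cases "even j")
  case True
  then show ?thesis by (auto simp: power_minus_even)
next
  case False
  then obtain m where j: "j = 2*m+1" by (metis oddE)
  with assms have "m < n" by auto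
  have "(\<Sum>k=1..n. interp_coeff n k * (real k ^ j - (- real k) ^ j)) = 2 * (\<Sum>k=1..n. interp_coeff n k * real k ^ (2*m+1))"
    using False j by (simp add: power_minus_odd sum_distrib_left algebra_simps)
  then show ?thesis using interp_coeff_odd_moment[OF \<open>m < n\<close>] j by auto
qed

lemma interp_scheme_exact_poly:
  assumes "\<epsilon> \<noteq> 0"
  shows "(1/\<epsilon>) * (\<Sum>k=1..n. interp_coeff n k *
      ((\<Sum>m<2*n+1. a m * (real k*\<epsilon>)^m) - (\<Sum>m<2*n+1. a m * (-(real k*\<epsilon>))^m))) = (if n = 0 then 0 else a 1)"
proof -
  have "(\<Sum>k=1..n. interp_coeff n k *
      ((\<Sum>m<2*n+1. a m * (real k*\<epsilon>)^m) - (\<Sum>m<2*n+1. a m * (-(real k*\<epsilon>))^m)))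
     = (\<Sum>k=1..n. \<Sum>m<2*n+1. a m * \<epsilon>^m * (interp_coeff n k * (real k ^ m - (- real k) ^ m)))"
  proof -
    have e: "(-(real k*\<epsilon>))^m = \<epsilon>^m * (- real k)^m" for k m
      by (metis minus_mult_left mult.commute power_mult_distrib)
    show ?thesis unfolding e
      by (auto intro!: sum.cong simp: sum_subtractf[symmetric] sum_distrib_left power_mult_distrib algebra_simps)
  qed
  also have "\<dots> = (\<Sum>m<2*n+1. a m * \<epsilon>^m * (\<Sum>k=1..n. interp_coeff n k * (real k ^ m - (- real k) ^ m)))"
    by (subst sum.swap) (simp add: sum_distrib_left)
  also have "\<dots> = (\<Sum>m<2*n+1. if m = 1 then a m * \<epsilon>^m else 0)"
  proof (rule sum.cong[OF refl])
    fix m assume "m \<in> {..<2*n+1}"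
    then have "m \<le> 2*n" by auto
    from interp_coeff_moment[OF this] show "a m * \<epsilon>^m * (\<Sum>k=1..n. interp_coeff n k * (real k ^ m - (- real k) ^ m))
       = (if m = 1 then a m * \<epsilon>^m else 0)" by simp
  qed
  also have "\<dots> = (if n = 0 then 0 else a 1 * \<epsilon>)"
    by (simp add: sum.delta)
  finally show ?thesis using assms by simp
qed

lemma Taylor_remainder_bound:
  fixes f :: "nat \<Rightarrow> real \<Rightarrow> real"
  assumes N: "N > 0"
    and der: "\<And>m t. m < N \<Longrightarrow> \<bar>t\<bar> \<le> R \<Longrightarrow> (f m has_real_derivative f (Suc m) t) (at t)"
    and bound: "\<And>t. \<bar>t\<bar> \<le> R \<Longrightarrow> \<bar>f N t\<bar> \<le> B"
    and s: "\<bar>s\<bar> \<le> R"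
  shows "\<bar>f 0 s - (\<Sum>m<N. f m 0 / fact m * s ^ m)\<bar> \<le> B * \<bar>s\<bar> ^ N / fact N"
proof -
  obtain \<tau> where \<tau>: "\<bar>\<tau>\<bar> \<le> \<bar>s\<bar>" "f 0 s = (\<Sum>m<N. f m 0 / fact m * s ^ m) + f N \<tau> / fact N * s ^ N"
  proof (cases rule: linorder_cases[of s 0])
    case less
    have "\<forall>m t. m < N \<and> s \<le> t \<and> t \<le> 0 \<longrightarrow> DERIV (f m) t :> f (Suc m) t"
      using der s less by auto
    from Taylor_down[OF N refl this, of 0] less obtain t where
      "s < t" "t < 0" "f 0 s = (\<Sum>m<N. f m 0 / fact m * (s - 0) ^ m) + f N t / fact N * (s - 0) ^ N"
      by auto
    then show ?thesis using that[of t] by auto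
  next
    case equal
    with N have "f 0 s = (\<Sum>m<N. f m 0 / fact m * s ^ m) + f N 0 / fact N * s ^ N"
      by (cases N) (simp_all add: sum.lessThan_Suc_shift)
    then show ?thesis using that[of 0] by simp
  next
    case greater
    have "\<forall>m t. m < N \<and> 0 \<le> t \<and> t \<le> s \<longrightarrow> DERIV (f m) t :> f (Suc m) t"
      using der s greater by auto
    from Taylor_up[OF N refl this, of 0] greater obtain t where
      "0 < t" "t < s" "f 0 s = (\<Sum>m<N. f m 0 / fact m * (s - 0) ^ m) + f N t / fact N * (s - 0) ^ N"
      by auto
    then show ?thesis using that[of t] by auto
  qed
  have "\<bar>f N \<tau>\<bar> \<le> B" using bound \<tau>(1) s by simp
  then show ?thesis
    using \<tau>(2) by (simp add: abs_mult power_abs divide_right_mono mult_right_mono)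
qed

definition interp_error_coeff :: "nat \<Rightarrow> real" where
  "interp_error_coeff n = 2 / fact (2*n+1) * (\<Sum>k=1..n. \<bar>interp_coeff n k\<bar> * real k ^ (2*n+1))"

lemma interp_scheme_error:
  fixes f :: "nat \<Rightarrow> real \<Rightarrow> real"
  assumes n: "n > 0" and \<epsilon>: "\<epsilon> \<noteq> 0" and R: "real n * \<bar>\<epsilon>\<bar> \<le> R"
    and der: "\<And>m t. m < 2*n+1 \<Longrightarrow> \<bar>t\<bar> \<le> R \<Longrightarrow> (f m has_real_derivative f (Suc m) t) (at t)"
    and bound: "\<And>t. \<bar>t\<bar> \<le> R \<Longrightarrow> \<bar>f (2*n+1) t\<bar> \<le> B"
  shows "\<bar>f 1 0 - (1/\<epsilon>) * (\<Sum>k=1..n. interp_coeff n k * (f 0 (real k * \<epsilon>) - f 0 (- (real k * \<epsilon>))))\<bar>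
           \<le> B * interp_error_coeff n * \<bar>\<epsilon>\<bar> ^ (2*n)"
proof -
  define N where "N = 2*n+1"
  define P where "P s = (\<Sum>m<N. f m 0 / fact m * s ^ m)" for s
  define E where "E s = f 0 s - P s" for s
  define S where "S = (\<Sum>k=1..n. interp_coeff n k * (E (real k * \<epsilon>) - E (- (real k * \<epsilon>))))"
  have E_bound: "\<bar>E s\<bar> \<le> B * \<bar>s\<bar> ^ N / fact N" if "\<bar>s\<bar> \<le> R" for s
    unfolding E_def P_def N_def by (rule Taylor_remainder_bound) (use der bound that in auto)
  have exact: "(1/\<epsilon>) * (\<Sum>k=1..n. interp_coeff n k * (P (real k * \<epsilon>) - P (- (real k * \<epsilon>)))) = f 1 0"
    using interp_scheme_exact_poly[OF \<epsilon>, of n "\<lambda>m. f m 0 / fact m"] n unfolding P_def N_def by simp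
  have "(\<Sum>k=1..n. interp_coeff n k * (f 0 (real k * \<epsilon>) - f 0 (- (real k * \<epsilon>))))
      = (\<Sum>k=1..n. interp_coeff n k * (P (real k * \<epsilon>) - P (- (real k * \<epsilon>)))) + S"
    unfolding S_def E_def by (simp add: sum.distrib[symmetric] algebra_simps)
  then have error: "f 1 0 - (1/\<epsilon>) * (\<Sum>k=1..n. interp_coeff n k * (f 0 (real k * \<epsilon>) - f 0 (- (real k * \<epsilon>))))
      = - (S / \<epsilon>)"
    using exact by (simp add: distrib_left)
  have "\<bar>S\<bar> \<le> (\<Sum>k=1..n. \<bar>interp_coeff n k\<bar> * (\<bar>E (real k * \<epsilon>)\<bar> + \<bar>E (- (real k * \<epsilon>))\<bar>))"
    unfolding S_def by (rule order_trans[OF sum_abs]) (auto intro!: sum_mono simp: abs_mult mult_left_mono)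
  also have "\<dots> \<le> (\<Sum>k=1..n. \<bar>interp_coeff n k\<bar> * (2 * (B * (real k * \<bar>\<epsilon>\<bar>) ^ N / fact N)))"
  proof (intro sum_mono mult_left_mono)
    fix k assume k: "k \<in> {1..n}"
    then have "real k * \<bar>\<epsilon>\<bar> \<le> real n * \<bar>\<epsilon>\<bar>" by (intro mult_right_mono) auto
    then have "\<bar>real k * \<epsilon>\<bar> \<le> R" using R by (simp add: abs_mult)
    then show "\<bar>E (real k * \<epsilon>)\<bar> + \<bar>E (- (real k * \<epsilon>))\<bar> \<le> 2 * (B * (real k * \<bar>\<epsilon>\<bar>) ^ N / fact N)"
      using E_bound[of "real k * \<epsilon>"] E_bound[of "- (real k * \<epsilon>)"] by (simp add: abs_mult)
  qed simp
  also have "\<dots> = B * interp_error_coeff n * \<bar>\<epsilon>\<bar> ^ N"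
    unfolding interp_error_coeff_def N_def
    by (simp add: sum_distrib_left sum_distrib_right power_mult_distrib mult_ac)
  finally have "\<bar>S\<bar> \<le> B * interp_error_coeff n * \<bar>\<epsilon>\<bar> ^ N" .
  then have "\<bar>S\<bar> / \<bar>\<epsilon>\<bar> \<le> B * interp_error_coeff n * \<bar>\<epsilon>\<bar> ^ N / \<bar>\<epsilon>\<bar>"
    by (simp add: divide_right_mono)
  also have "\<dots> = B * interp_error_coeff n * \<bar>\<epsilon>\<bar> ^ (2*n)"
    using \<epsilon> unfolding N_def by simp
  finally show ?thesis unfolding error by simp
qed

lemma interp_scheme_error_euclidean:
  fixes F :: "nat \<Rightarrow> real \<Rightarrow> 'a::euclidean_space"
  assumes n: "n > 0" and \<epsilon>: "\<epsilon> \<noteq> 0" and R: "real n * \<bar>\<epsilon>\<bar> \<le> R"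
    and der: "\<And>m t. m < 2*n+1 \<Longrightarrow> \<bar>t\<bar> \<le> R \<Longrightarrow> (F m has_vector_derivative F (Suc m) t) (at t)"
    and bound: "\<And>t. \<bar>t\<bar> \<le> R \<Longrightarrow> norm (F (2*n+1) t) \<le> B"
  shows "norm (F 1 0 - (1/\<epsilon>) *\<^sub>R (\<Sum>k=1..n. interp_coeff n k *\<^sub>R (F 0 (real k * \<epsilon>) - F 0 (- (real k * \<epsilon>)))))
           \<le> real DIM('a) * B * interp_error_coeff n * \<bar>\<epsilon>\<bar> ^ (2*n)"
    (is "norm ?err \<le> _")
proof -
  have "\<bar>?err \<bullet> b\<bar> \<le> B * interp_error_coeff n * \<bar>\<epsilon>\<bar> ^ (2*n)" if b: "b \<in> Basis" for b
  proof -
    have "\<bar>F 1 0 \<bullet> b - (1/\<epsilon>) * (\<Sum>k=1..n. interp_coeff n k * (F 0 (real k * \<epsilon>) \<bullet> b - F 0 (- (real k * \<epsilon>)) \<bullet> b))\<bar>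
        \<le> B * interp_error_coeff n * \<bar>\<epsilon>\<bar> ^ (2*n)"
    proof (rule interp_scheme_error[OF n \<epsilon> R, where f = "\<lambda>m t. F m t \<bullet> b"])
      fix m t assume "m < 2*n+1" "\<bar>t\<bar> \<le> R"
      from bounded_linear.has_vector_derivative[OF bounded_linear_inner_left der[OF this], of b]
      show "((\<lambda>t. F m t \<bullet> b) has_real_derivative F (Suc m) t \<bullet> b) (at t)"
        by (simp add: has_real_derivative_iff_has_vector_derivative)
    next
      fix t assume "\<bar>t\<bar> \<le> R"
      then show "\<bar>F (2*n+1) t \<bullet> b\<bar> \<le> B" using Basis_le_norm[OF b] bound order_trans by blast
    qed
    then show ?thesis by (simp add: inner_diff_left inner_sum_left)
  qed
  then have "(\<Sum>b\<in>Basis. \<bar>?err \<bullet> b\<bar>) \<le> (\<Sum>b\<in>(Basis::'a set). B * interp_error_coeff n * \<bar>\<epsilon>\<bar> ^ (2*n))"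
    by (rule sum_mono)
  then show ?thesis using norm_le_l1[of ?err] by (simp add: mult_ac)
qed

lemma flow_domain_contains_tube:
  assumes fl: "is_flow Y D Phi Omega" and K: "compact K" "K \<subseteq> D"
  obtains \<eta> where "\<eta> > 0" "\<And>x t. x \<in> K \<Longrightarrow> \<bar>t\<bar> < \<eta> \<Longrightarrow> (t, x) \<in> Omega"
proof -
  have "compact ((\<lambda>x. (0::real, x)) ` K)"
    by (rule compact_continuous_image) (auto intro!: continuous_intros K)
  moreover have "(\<lambda>x. (0::real, x)) ` K \<subseteq> Omega" using is_flowD(2)[OF fl] K by auto
  ultimately obtain e where e: "e > 0" "(\<Union>p\<in>(\<lambda>x. (0::real, x)) ` K. ball p e) \<subseteq> Omega"
    using compact_subset_open_imp_ball_epsilon_subset[OF _ is_flowD(1)[OF fl]] by metis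
  show ?thesis
  proof (rule that[OF e(1)])
    fix x t assume "x \<in> K" "\<bar>t\<bar> < e"
    then have "(t, x) \<in> ball (0, x) e" by (simp add: dist_Pair_Pair dist_real_def)
    then show "(t, x) \<in> Omega" using e(2) \<open>x \<in> K\<close> by blast
  qed
qed

lemma flow_displacement_le:
  assumes fl: "is_flow Y D Phi Omega" and x: "x \<in> D"
    and Om: "\<And>u. u \<in> closed_segment 0 s \<Longrightarrow> (u, x) \<in> Omega"
    and M: "\<And>u. u \<in> closed_segment 0 s \<Longrightarrow> norm (Y (Phi u x)) \<le> M"
  shows "norm (Phi s x - x) \<le> M * \<bar>s\<bar>"
proof -
  have "norm (Phi s x - Phi 0 x) \<le> M * norm (s - 0)"
  proof (rule differentiable_bound[where f = "\<lambda>u. Phi u x" and f' = "\<lambda>u h. h *\<^sub>R Y (Phi u x)"])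
    show "convex (closed_segment 0 s)" by simp
    fix u assume u: "u \<in> closed_segment 0 s"
    show "((\<lambda>u. Phi u x) has_derivative (\<lambda>h. h *\<^sub>R Y (Phi u x))) (at u within closed_segment 0 s)"
      using is_flowD(5)[OF fl Om[OF u]] has_vector_derivative_def has_derivative_at_withinI by blast
    show "onorm (\<lambda>h. h *\<^sub>R Y (Phi u x)) \<le> M"
      using M[OF u] by (simp add: onorm_scaleR_left[OF bounded_linear_ident] onorm_id)
  qed auto
  then show ?thesis using is_flowD(3)[OF fl x] by simp
qed

lemma segment_first_exit:
  fixes \<gamma> :: "real \<Rightarrow> 'a::real_normed_vector"
  assumes cont: "continuous_on (closed_segment 0 t) \<gamma>"
    and start: "norm (\<gamma> 0 - c) < r" and leave: "r \<le> norm (\<gamma> t - c)"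
  obtains s where "s \<in> closed_segment 0 t" "r \<le> norm (\<gamma> s - c)"
    "\<And>u. u \<in> closed_segment 0 s \<Longrightarrow> norm (\<gamma> u - c) \<le> r"
proof -
  define A where "A = {s \<in> closed_segment 0 t. r \<le> norm (\<gamma> s - c)}"
  have "closed A" unfolding A_def
    by (rule continuous_on_closed_Collect_le) (auto intro!: continuous_intros cont)
  then have "compact (closed_segment 0 t \<inter> A)" by (rule compact_Int_closed[OF compact_segment])
  moreover have "closed_segment 0 t \<inter> A = A" by (auto simp: A_def)
  moreover have "A \<noteq> {}" using leave unfolding A_def by auto
  ultimately obtain s where s: "s \<in> A" "\<And>u. u \<in> A \<Longrightarrow> \<bar>s\<bar> \<le> \<bar>u\<bar>"
    using continuous_attains_inf[of A abs] continuous_on_rabs[OF continuous_on_id] by auto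
  have s_seg: "s \<in> closed_segment 0 t" and s_far: "r \<le> norm (\<gamma> s - c)" using s(1) A_def by auto
  have "s \<noteq> 0" using s_far start by auto
  have subseg: "closed_segment 0 s \<subseteq> closed_segment 0 t"
    using s_seg by (auto simp: closed_segment_eq_real_ivl split: if_splits)
  define C where "C = {u \<in> closed_segment 0 s. norm (\<gamma> u - c) \<le> r}"
  have "closed C" unfolding C_def
    by (rule continuous_on_closed_Collect_le)
      (auto intro!: continuous_intros continuous_on_subset[OF cont subseg])
  moreover have "open_segment 0 s \<subseteq> C"
  proof
    fix v assume v: "v \<in> open_segment 0 s"
    then have "\<bar>v\<bar> < \<bar>s\<bar>" by (auto simp: open_segment_eq_real_ivl split: if_splits)
    moreover have "v \<in> closed_segment 0 s" using v open_closed_segment by blast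
    ultimately show "v \<in> C" using s(2)[of v] subseg unfolding C_def A_def by force
  qed
  ultimately have "closure (open_segment 0 s) \<subseteq> C" by (rule closure_minimal[rotated])
  then have "norm (\<gamma> u - c) \<le> r" if "u \<in> closed_segment 0 s" for u
    using that \<open>s \<noteq> 0\<close> unfolding C_def by auto
  with s_seg s_far show ?thesis by (rule that)
qed

lemma flow_stays_in_ball:
  assumes fl: "is_flow Y D Phi Omega" and x: "x \<in> D" and r: "r > 0"
    and Om: "\<And>s. \<bar>s\<bar> \<le> \<bar>t\<bar> \<Longrightarrow> (s, x) \<in> Omega"
    and M: "\<And>y. y \<in> cball x r \<Longrightarrow> norm (Y y) \<le> M"
    and Mt: "M * \<bar>t\<bar> < r"
  shows "norm (Phi t x - x) < r"
proof (rule ccontr)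
  assume "\<not> norm (Phi t x - x) < r"
  have seg: "\<bar>s\<bar> \<le> \<bar>t\<bar>" if "s \<in> closed_segment 0 t" for s
    using that by (auto simp: closed_segment_eq_real_ivl split: if_splits)
  have "continuous_on (closed_segment 0 t) (\<lambda>s. Phi s x)"
    using is_flowD(5)[OF fl Om] seg
    by (meson continuous_at_imp_continuous_on has_vector_derivative_continuous)
  then obtain s where s: "s \<in> closed_segment 0 t" "r \<le> norm (Phi s x - x)"
    and inside: "\<And>u. u \<in> closed_segment 0 s \<Longrightarrow> norm (Phi u x - x) \<le> r"
    by (rule segment_first_exit[where c = x and r = r]) (use \<open>\<not> norm (Phi t x - x) < r\<close> is_flowD(3)[OF fl x] r in auto)
  have subseg: "closed_segment 0 s \<subseteq> closed_segment 0 t"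
    using s(1) by (auto simp: closed_segment_eq_real_ivl split: if_splits)
  have "norm (Phi s x - x) \<le> M * \<bar>s\<bar>"
  proof (rule flow_displacement_le[OF fl x])
    fix u assume u: "u \<in> closed_segment 0 s"
    show "(u, x) \<in> Omega" using Om seg subseg u by blast
    show "norm (Y (Phi u x)) \<le> M"
      using M inside[OF u] by (simp add: dist_norm norm_minus_commute)
  qed
  also have "\<dots> \<le> M * \<bar>t\<bar>"
    using M[of x] r seg[OF s(1)] by (intro mult_left_mono) (auto intro: order_trans[OF norm_ge_zero])
  finally show False using s(2) Mt by simp
qed

lemma flow_locally_uniform:
  assumes fl: "is_flow Y D Phi Omega" and D: "open D" and Y: "continuous_on D Y"
    and K: "compact K" "K \<subseteq> D"
  obtains \<delta> L where "\<delta> > 0" "compact L" "L \<subseteq> D"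
    "\<And>x t. x \<in> K \<Longrightarrow> \<bar>t\<bar> \<le> \<delta> \<Longrightarrow> (t, x) \<in> Omega \<and> Phi t x \<in> L"
proof -
  obtain r where r: "r > 0" "(\<Union>x\<in>K. cball x r) \<subseteq> D"
    using compact_subset_open_imp_cball_epsilon_subset[OF K(1) D K(2)] by blast
  define L where "L = (\<Union>x\<in>K. cball x r)"
  have L: "compact L" "L \<subseteq> D"
    using compact_minkowski_sum_cball[OF K(1)] r(2) unfolding L_def by auto
  obtain M0 where M0: "\<And>y. y \<in> L \<Longrightarrow> norm (Y y) \<le> M0"
    using continuous_on_compact_bound[OF L(1) continuous_on_subset[OF Y L(2)]] by blast
  define M where "M = max M0 1"
  obtain \<eta> where \<eta>: "\<eta> > 0" "\<And>x t. x \<in> K \<Longrightarrow> \<bar>t\<bar> < \<eta> \<Longrightarrow> (t, x) \<in> Omega"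
    using flow_domain_contains_tube[OF fl K] by blast
  define \<delta> where "\<delta> = min (\<eta>/2) (r/(2*M))"
  show ?thesis
  proof (rule that[OF _ L])
    show "\<delta> > 0" using \<eta> r by (simp add: \<delta>_def M_def)
    fix x t assume x: "x \<in> K" and t: "\<bar>t\<bar> \<le> \<delta>"
    have Om: "(s, x) \<in> Omega" if "\<bar>s\<bar> \<le> \<bar>t\<bar>" for s
      using \<eta>(2)[OF x] that t \<eta>(1) by (simp add: \<delta>_def)
    have MY: "norm (Y y) \<le> M" if "y \<in> cball x r" for y
      using M0[of y] that x unfolding L_def M_def by force
    have "M * \<bar>t\<bar> \<le> M * (r/(2*M))"
      using t by (intro mult_left_mono) (auto simp: \<delta>_def M_def)
    also have "\<dots> < r" using r by (simp add: M_def)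
    finally have "norm (Phi t x - x) < r"
      using flow_stays_in_ball[OF fl _ r(1) Om MY] x K(2) by blast
    then have "Phi t x \<in> cball x r" by (simp add: dist_norm norm_minus_commute)
    then show "(t, x) \<in> Omega \<and> Phi t x \<in> L"
      using Om[of t] x unfolding L_def by blast
  qed
qed

lemma interp_field_error_along_flow:
  fixes Y :: "'a::euclidean_space \<Rightarrow> 'a"
  assumes fl: "is_flow Y D Phi Omega" and D: "open D" and Y: "smooth_on D Y"
    and n: "n > 0" and \<epsilon>: "\<epsilon> \<noteq> 0" and x: "x \<in> D"
    and orbit: "\<And>t. \<bar>t\<bar> \<le> real n * \<bar>\<epsilon>\<bar> \<Longrightarrow> (t, x) \<in> Omega \<and> norm (lie_iter Y (2*n+1) (Phi t x)) \<le> B"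
  shows "norm (Y x - interp_field Phi n x \<epsilon>) \<le> real DIM('a) * B * interp_error_coeff n * \<bar>\<epsilon>\<bar> ^ (2*n)"
proof -
  have "norm (lie_iter Y 1 (Phi 0 x) - (1/\<epsilon>) *\<^sub>R (\<Sum>k=1..n. interp_coeff n k *\<^sub>R
          (lie_iter Y 0 (Phi (real k * \<epsilon>) x) - lie_iter Y 0 (Phi (- (real k * \<epsilon>)) x))))
        \<le> real DIM('a) * B * interp_error_coeff n * \<bar>\<epsilon>\<bar> ^ (2*n)"
  proof (rule interp_scheme_error_euclidean[OF n \<epsilon> order_refl])
    fix m t assume "\<bar>t\<bar> \<le> real n * \<bar>\<epsilon>\<bar>"
    then show "((\<lambda>t. lie_iter Y m (Phi t x)) has_vector_derivative lie_iter Y (Suc m) (Phi t x)) (at t)"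
      using has_vector_derivative_along_flow[OF fl smooth_on_lie_iter[OF D Y]] orbit by simp
  qed (use orbit in simp)
  then show ?thesis using is_flowD(3)[OF fl x] by (simp add: interp_field_def)
qed

theorem mainTheorem5:
  fixes D :: "'a::euclidean_space set" and Y :: "'a \<Rightarrow> 'a"
    and Phi :: "real \<Rightarrow> 'a \<Rightarrow> 'a" and Omega :: "(real \<times> 'a) set" and n :: nat
  assumes "open D" and "smooth_on D Y" and "is_flow Y D Phi Omega"
  shows "\<forall>K. compact K \<and> K \<subseteq> D \<longrightarrow>
           (\<exists>C \<epsilon>0. \<epsilon>0 > 0 \<and>
              (\<forall>\<epsilon> x. 0 < \<bar>\<epsilon>\<bar> \<and> \<bar>\<epsilon>\<bar> < \<epsilon>0 \<and> x \<in> K \<longrightarrow>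
                 (\<forall>k::int. \<bar>k\<bar> \<le> int n \<longrightarrow> (real_of_int k * \<epsilon>, x) \<in> Omega) \<and>
                 norm (Y x - interp_field Phi n x \<epsilon>) \<le> C * \<bar>\<epsilon>\<bar> ^ (2 * n)))"
proof (intro allI impI)
  fix K assume "compact K \<and> K \<subseteq> D"
  then have K: "compact K" "K \<subseteq> D" by auto
  have smooth: "continuous_on D (lie_iter Y j)" for j
    using smooth_on_imp_continuous_on[OF smooth_on_lie_iter[OF assms(1,2)]] .
  obtain \<delta> L where \<delta>: "\<delta> > 0" and L: "compact L" "L \<subseteq> D"
    and orbit: "\<And>x t. x \<in> K \<Longrightarrow> \<bar>t\<bar> \<le> \<delta> \<Longrightarrow> (t, x) \<in> Omega \<and> Phi t x \<in> L"
    using flow_locally_uniform[OF assms(3,1) smooth_on_imp_continuous_on[OF assms(2)] K] by blast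
  obtain B where B: "\<And>y. y \<in> L \<Longrightarrow> norm (lie_iter Y (2*n+1) y) \<le> B"
    using continuous_on_compact_bound[OF L(1) continuous_on_subset[OF smooth L(2)]] by blast
  obtain M where M: "\<And>y. y \<in> K \<Longrightarrow> norm (lie_iter Y 1 y) \<le> M"
    using continuous_on_compact_bound[OF K(1) continuous_on_subset[OF smooth K(2)]] by blast
  define C where "C = (if n = 0 then M else real DIM('a) * B * interp_error_coeff n)"
  show "\<exists>C \<epsilon>0. \<epsilon>0 > 0 \<and> (\<forall>\<epsilon> x. 0 < \<bar>\<epsilon>\<bar> \<and> \<bar>\<epsilon>\<bar> < \<epsilon>0 \<and> x \<in> K \<longrightarrow>
          (\<forall>k::int. \<bar>k\<bar> \<le> int n \<longrightarrow> (real_of_int k * \<epsilon>, x) \<in> Omega) \<and>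
          norm (Y x - interp_field Phi n x \<epsilon>) \<le> C * \<bar>\<epsilon>\<bar> ^ (2 * n))"
  proof (intro exI conjI allI impI)
    show "\<delta> / (real n + 1) > 0" using \<delta> by simp
    fix \<epsilon> x assume "0 < \<bar>\<epsilon>\<bar> \<and> \<bar>\<epsilon>\<bar> < \<delta> / (real n + 1) \<and> x \<in> K"
    then have \<epsilon>: "\<epsilon> \<noteq> 0" and x: "x \<in> K" and R: "real n * \<bar>\<epsilon>\<bar> \<le> \<delta>"
      by (auto simp: field_simps)
    show "(real_of_int k * \<epsilon>, x) \<in> Omega" if "\<bar>k\<bar> \<le> int n" for k
    proof -
      have "\<bar>real_of_int k\<bar> * \<bar>\<epsilon>\<bar> \<le> real n * \<bar>\<epsilon>\<bar>" using that by (intro mult_right_mono) auto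
      then show ?thesis using orbit[OF x] R by (simp add: abs_mult)
    qed
    show "norm (Y x - interp_field Phi n x \<epsilon>) \<le> C * \<bar>\<epsilon>\<bar> ^ (2 * n)"
    proof (cases "n = 0")
      case True
      then show ?thesis using M[OF x] by (simp add: C_def interp_field_def)
    next
      case False
      have "norm (Y x - interp_field Phi n x \<epsilon>) \<le> real DIM('a) * B * interp_error_coeff n * \<bar>\<epsilon>\<bar> ^ (2*n)"
        by (rule interp_field_error_along_flow[OF assms(3,1,2) _ \<epsilon>]) (use False x K orbit B R in auto)
      then show ?thesis using False by (simp add: C_def)
    qed
  qed
qed

end
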